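(* For every $X\in\overline\Omega_{1/6}$, $$\|\nabla h(X)\|_F^2\ge\|\nabla g(X)\|_F^2+\Big(\frac23\beta^2-4\beta M_1\Big)\|X^\top X-I_p\|_F^2 .$$
   Context: $f:\mathbb{R}^{n\times p}\to\mathbb{R}$ is differentiable with $f,\nabla f$ locally Lipschitz. $\mathcal{A}(X):=\frac32I_p-\frac12X^\top X$, $g(X):=f(X\mathcal{A}(X))$, $h(X):=g(X)+\frac\beta4\|X^\top X-I_p\|_F^2$ with $\beta>0$, $G(X):=\nabla f(Y)|_{Y=X\mathcal{A}(X)}$. $\overline\Omega_r:=\{X:\|X^\top X-I_p\|_F\le r\}$; $\Omega:=\{X:\|X\|_2\le1+\frac1{12}\}$; $M_1:=\sup_{X\in\Omega}\|G(X)\|_F$. *)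

theory Defs
  imports "HOL-Analysis.Analysis"
begin

text \<open>Matrices in R^(n x p) are rendered as real^'p^'n. The norm of this type is
the Frobenius norm and the inner product is the Frobenius (trace) inner product.\<close>

definition locally_lipschitz :: "('a::metric_space \<Rightarrow> 'b::metric_space) \<Rightarrow> bool" where
  "locally_lipschitz F \<longleftrightarrow>
     (\<forall>x. \<exists>e>0. \<exists>L. \<forall>y\<in>ball x e. \<forall>z\<in>ball x e. dist (F y) (F z) \<le> L * dist y z)"

definition grad :: "('a::real_inner \<Rightarrow> real) \<Rightarrow> 'a \<Rightarrow> 'a" where
  "grad F X = (THE v. (F has_derivative (\<lambda>H. v \<bullet> H)) (at X))"

definition Amap :: "real^'p^'n \<Rightarrow> real^'p^'p" where
  "Amap X = (3/2) *\<^sub>R mat 1 - (1/2) *\<^sub>R (transpose X ** X)"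

definition gfun :: "(real^'p^'n \<Rightarrow> real) \<Rightarrow> real^'p^'n \<Rightarrow> real" where
  "gfun f X = f (X ** Amap X)"

definition hfun :: "(real^'p^'n \<Rightarrow> real) \<Rightarrow> real \<Rightarrow> real^'p^'n \<Rightarrow> real" where
  "hfun f \<beta> X = gfun f X + (\<beta> / 4) * (norm (transpose X ** X - mat 1))\<^sup>2"

definition Gfun :: "(real^'p^'n \<Rightarrow> real) \<Rightarrow> real^'p^'n \<Rightarrow> real^'p^'n" where
  "Gfun f X = grad f (X ** Amap X)"

definition OmegaBar :: "real \<Rightarrow> (real^'p^'n) set" where
  "OmegaBar r = {X. norm (transpose X ** X - mat 1) \<le> r}"

text \<open>Spectral norm as the operator norm of v \<mapsto> X v.\<close>
definition Omega :: "(real^'p^'n) set" where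
  "Omega = {X. onorm (\<lambda>v. X *v v) \<le> 1 + 1/12}"

definition M1 :: "(real^'p^'n \<Rightarrow> real) \<Rightarrow> real" where
  "M1 f = (SUP X\<in>(Omega :: (real^'p^'n) set). norm (Gfun f X))"

end

(*
  With D = X^T X - I one has grad h(X) = grad g(X) + beta X D, so expanding the square
  leaves the cross term 2 beta <grad g(X), X D> and beta^2 |X D|^2 >= (1 - |D|) beta^2 |D|^2.
  The cross term is of second order in D: the differential of X -> X A(X) maps X D to
  -(3/2) X D^2, so <grad g(X), X D> = -(3/2) <G(X), X D^2>, and |X D^2| <= (4/3) |D|^2 for
  |D| <= 1/6. Finally |G(X)| <= M1, since the set Omega is bounded, contains OmegaBar(1/6),
  and G is continuous.
*)
theory Submission
  imports Defs
begin

lemma transpose_add: "transpose (A + B) = transpose A + (transpose B :: real^'n^'m)"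
  by (simp add: transpose_def vec_eq_iff)

lemma transpose_diff: "transpose (A - B) = transpose A - (transpose B :: real^'n^'m)"
  by (simp add: transpose_def vec_eq_iff)

lemma matrix_add_rdistrib: "((A::real^'k^'n) + B) ** (C::real^'p^'k) = A ** C + B ** C"
  by (simp add: matrix_matrix_mult_def vec_eq_iff sum.distrib algebra_simps)

lemma matrix_diff_ldistrib: "(A::real^'k^'n) ** ((B::real^'p^'k) - C) = A ** B - A ** C"
  by (simp add: matrix_matrix_mult_def vec_eq_iff sum_subtractf algebra_simps)

lemma bilinear_matrix_mult: "bilinear (\<lambda>(A::real^'k^'n) (B::real^'p^'k). A ** B)"
  unfolding bilinear_def
  by (auto intro!: linearI simp: matrix_add_ldistrib matrix_add_rdistrib
      matrix_scalar_ac scalar_matrix_assoc[symmetric])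

lemma bounded_bilinear_matrix_mult:
  "bounded_bilinear (\<lambda>(A::real^'k^'n) (B::real^'p^'k). A ** B)"
  using bilinear_matrix_mult bilinear_conv_bounded_bilinear by blast

lemma bounded_linear_transpose: "bounded_linear (transpose :: real^'p^'n \<Rightarrow> real^'n^'p)"
  by (simp add: linear_conv_bounded_linear[symmetric] linearI transpose_add transpose_scalar)

lemma inner_transpose: "transpose A \<bullet> transpose B = A \<bullet> (B :: real^'p^'n)"
  by (simp add: inner_vec_def transpose_def sum.swap[of _ "UNIV::'p set"])

lemma inner_matrix_mult_left:
  fixes A :: "real^'k^'n" and B :: "real^'p^'k" and C :: "real^'p^'n"
  shows "(A ** B) \<bullet> C = B \<bullet> (transpose A ** C)"
proof -
  have "(A ** B) \<bullet> C = (\<Sum>i\<in>UNIV. \<Sum>j\<in>UNIV. \<Sum>k\<in>UNIV. A$i$k * B$k$j * C$i$j)"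
    unfolding inner_vec_def matrix_matrix_mult_def by (simp add: sum_distrib_right)
  also have "\<dots> = (\<Sum>k\<in>UNIV. \<Sum>j\<in>UNIV. \<Sum>i\<in>UNIV. A$i$k * B$k$j * C$i$j)"
    by (subst sum.swap) (simp add: sum.swap[of _ "UNIV::'n set"])
  also have "\<dots> = B \<bullet> (transpose A ** C)"
    unfolding inner_vec_def matrix_matrix_mult_def transpose_def
    by (simp add: sum_distrib_left mult_ac)
  finally show ?thesis .
qed

lemma inner_matrix_mult_right:
  fixes A :: "real^'k^'n" and B :: "real^'p^'k" and C :: "real^'p^'n"
  shows "(A ** B) \<bullet> C = A \<bullet> (C ** transpose B)"
proof -
  have "(A ** B) \<bullet> C = (transpose B ** transpose A) \<bullet> transpose C"
    by (simp add: inner_transpose flip: matrix_transpose_mul)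
  also have "\<dots> = transpose A \<bullet> transpose (C ** transpose B)"
    by (simp add: inner_matrix_mult_left matrix_transpose_mul)
  finally show ?thesis by (simp add: inner_transpose)
qed

lemma power2_norm_add_scaleR:
  fixes a w :: "'a::real_inner"
  shows "(norm (a + c *\<^sub>R w))\<^sup>2 = (norm a)\<^sup>2 + 2 * c * (a \<bullet> w) + c\<^sup>2 * (norm w)\<^sup>2"
  unfolding power2_norm_eq_inner
  by (simp add: inner_add_left inner_add_right inner_commute power2_eq_square algebra_simps)

lemma norm_sq_matrix: "(norm (M::real^'p^'n))\<^sup>2 = (\<Sum>i\<in>UNIV. \<Sum>j\<in>UNIV. (M$i$j)\<^sup>2)"
  unfolding power2_norm_eq_inner by (simp add: inner_vec_def power2_eq_square)

lemma norm_sq_vector: "(norm (v::real^'n))\<^sup>2 = (\<Sum>i\<in>UNIV. (v$i)\<^sup>2)"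
  unfolding power2_norm_eq_inner by (simp add: inner_vec_def power2_eq_square)

lemma norm_matrix_mult_le:
  fixes A :: "real^'k^'n" and B :: "real^'p^'k"
  shows "norm (A ** B) \<le> norm A * norm B"
proof -
  have "(norm (A ** B))\<^sup>2 = (\<Sum>i\<in>UNIV. \<Sum>j\<in>UNIV. (\<Sum>k\<in>UNIV. A$i$k * B$k$j)\<^sup>2)"
    by (simp add: norm_sq_matrix matrix_matrix_mult_def)
  also have "\<dots> \<le> (\<Sum>i\<in>UNIV. \<Sum>j\<in>UNIV. (\<Sum>k\<in>UNIV. (A$i$k)\<^sup>2) * (\<Sum>k\<in>UNIV. (B$k$j)\<^sup>2))"
    by (intro sum_mono Cauchy_Schwarz_ineq_sum)
  also have "\<dots> = (\<Sum>i\<in>UNIV. \<Sum>k\<in>UNIV. (A$i$k)\<^sup>2) * (\<Sum>j\<in>UNIV. \<Sum>k\<in>UNIV. (B$k$j)\<^sup>2)"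
    by (rule sum_product[symmetric])
  also have "\<dots> = (norm A * norm B)\<^sup>2"
    by (simp add: norm_sq_matrix power_mult_distrib sum.swap[of _ "UNIV::'p set"])
  finally show ?thesis
    by (meson norm_ge_zero power2_le_imp_le zero_le_mult_iff)
qed

lemma norm_matrix_vector_mult_le:
  fixes A :: "real^'k^'n" and v :: "real^'k"
  shows "norm (A *v v) \<le> norm A * norm v"
proof -
  have "(norm (A *v v))\<^sup>2 = (\<Sum>i\<in>UNIV. (\<Sum>k\<in>UNIV. A$i$k * v$k)\<^sup>2)"
    by (simp add: norm_sq_vector matrix_vector_mult_def)
  also have "\<dots> \<le> (\<Sum>i\<in>UNIV. (\<Sum>k\<in>UNIV. (A$i$k)\<^sup>2) * (\<Sum>k\<in>UNIV. (v$k)\<^sup>2))"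
    by (intro sum_mono Cauchy_Schwarz_ineq_sum)
  also have "\<dots> = (norm A * norm v)\<^sup>2"
    by (simp add: norm_sq_matrix norm_sq_vector power_mult_distrib sum_distrib_right)
  finally show ?thesis
    by (meson norm_ge_zero power2_le_imp_le zero_le_mult_iff)
qed

lemma locally_lipschitz_imp_isCont:
  assumes "locally_lipschitz F"
  shows "isCont F x"
proof -
  obtain e L where "e > 0" and L: "\<forall>y\<in>ball x e. \<forall>z\<in>ball x e. dist (F y) (F z) \<le> L * dist y z"
    using assms unfolding locally_lipschitz_def by blast
  have "lipschitz_on (max L 0) (ball x e) F"
    unfolding lipschitz_on_def
  proof (intro conjI ballI)
    fix y z assume "y \<in> ball x e" "z \<in> ball x e"
    then have "dist (F y) (F z) \<le> L * dist y z" using L by blast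
    also have "\<dots> \<le> max L 0 * dist y z" by (intro mult_right_mono) auto
    finally show "dist (F y) (F z) \<le> max L 0 * dist y z" .
  qed simp
  then have "continuous_on (ball x e) F" by (rule lipschitz_on_continuous_on)
  with \<open>e > 0\<close> show ?thesis by (simp add: continuous_on_eq_continuous_at)
qed

lemma grad_eqI:
  fixes F :: "'a::real_inner \<Rightarrow> real"
  assumes "(F has_derivative (\<lambda>H. v \<bullet> H)) (at x)"
  shows "grad F x = v"
  unfolding grad_def
proof (rule the_equality)
  fix w assume "(F has_derivative (\<lambda>H. w \<bullet> H)) (at x)"
  then have "(\<lambda>H. w \<bullet> H) = (\<lambda>H. v \<bullet> H)" using assms by (rule has_derivative_unique)
  then have "(w - v) \<bullet> (w - v) = 0" by (metis inner_diff_left right_minus_eq)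
  then show "w = v" by simp
qed (fact assms)

lemma has_derivative_grad:
  fixes F :: "'a::euclidean_space \<Rightarrow> real"
  assumes d: "(F has_derivative F') (at x)"
  shows "F' = (\<lambda>H. grad F x \<bullet> H)"
proof -
  define v where "v = (\<Sum>b\<in>Basis. F' b *\<^sub>R b)"
  have lin: "linear F'" using d by (rule has_derivative_linear)
  have F': "F' H = v \<bullet> H" for H
  proof -
    have "F' H = F' (\<Sum>b\<in>Basis. (H \<bullet> b) *\<^sub>R b)" by (simp add: euclidean_representation)
    also have "\<dots> = v \<bullet> H"
      unfolding v_def inner_sum_left
    by (simp add: linear_sum[OF lin] linear_scale[OF lin] inner_commute mult.commute)
    finally show ?thesis .
  qed
  then have "F' = (\<lambda>H. v \<bullet> H)" by blast
  then have "grad F x = v" using d by (intro grad_eqI) simp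
  then show ?thesis using F' by auto
qed

lemma has_derivative_gram:
  "((\<lambda>X::real^'p^'n. transpose X ** X) has_derivative
     (\<lambda>H. transpose X ** H + transpose H ** X)) (at X)"
  by (rule bounded_bilinear.FDERIV[OF bounded_bilinear_matrix_mult
      bounded_linear.has_derivative[OF bounded_linear_transpose has_derivative_ident]
      has_derivative_ident])

lemma has_derivative_mult_Amap:
  "((\<lambda>X::real^'p^'n. X ** Amap X) has_derivative
     (\<lambda>H. X ** ((-(1/2)) *\<^sub>R (transpose X ** H + transpose H ** X)) + H ** Amap X)) (at X)"
proof -
  have "(Amap has_derivative (\<lambda>H. (-(1/2)) *\<^sub>R (transpose X ** H + transpose H ** X))) (at X)"
    unfolding Amap_def[abs_def]
    by (rule has_derivative_eq_rhs, (rule derivative_intros has_derivative_gram)+) simp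
  from bounded_bilinear.FDERIV[OF bounded_bilinear_matrix_mult has_derivative_ident this]
  show ?thesis by simp
qed

lemma transpose_gram_defect:
  fixes X :: "real^'p^'n"
  shows "transpose (transpose X ** X - mat 1) = transpose X ** X - mat 1"
  by (simp add: transpose_diff matrix_transpose_mul)

lemma has_derivative_penalty:
  "((\<lambda>X::real^'p^'n. (\<beta>/4) * (norm (transpose X ** X - mat 1))\<^sup>2) has_derivative
     (\<lambda>H. (\<beta> *\<^sub>R (X ** (transpose X ** X - mat 1))) \<bullet> H)) (at X)"
proof -
  define D where "D = transpose X ** X - mat 1"
  define dD where "dD H = transpose X ** H + transpose H ** X" for H :: "real^'p^'n"
  have "((\<lambda>X::real^'p^'n. transpose X ** X - mat 1) has_derivative dD) (at X)"
    unfolding dD_def by (rule has_derivative_eq_rhs, (rule derivative_intros has_derivative_gram)+) simp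
  from bounded_bilinear.FDERIV[OF bounded_bilinear_inner this this]
  have "((\<lambda>X::real^'p^'n. (norm (transpose X ** X - mat 1))\<^sup>2) has_derivative
      (\<lambda>H. D \<bullet> dD H + dD H \<bullet> D)) (at X)"
    by (simp add: D_def power2_norm_eq_inner)
  moreover have "D \<bullet> dD H + dD H \<bullet> D = 4 * ((X ** D) \<bullet> H)" for H
  proof -
    have left: "(transpose X ** H) \<bullet> D = (X ** D) \<bullet> H"
      using inner_matrix_mult_left[of "transpose X" H D] by (simp add: inner_commute)
    have "(transpose H ** X) \<bullet> D = transpose H \<bullet> transpose (X ** D)"
      by (simp add: inner_matrix_mult_right matrix_transpose_mul D_def transpose_gram_defect)
    then have right: "(transpose H ** X) \<bullet> D = (X ** D) \<bullet> H"
      by (simp add: inner_transpose inner_commute)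
    show ?thesis
      using left right by (simp add: dD_def inner_add_left inner_add_right inner_commute)
  qed
  ultimately show ?thesis
    unfolding D_def by (auto dest: has_derivative_mult_right[of _ _ _ "\<beta>/4"])
qed

lemma has_derivative_gfun:
  assumes "f differentiable (at (X ** Amap X))"
  shows "(gfun f has_derivative
     (\<lambda>H. Gfun f X \<bullet> (X ** ((-(1/2)) *\<^sub>R (transpose X ** H + transpose H ** X)) + H ** Amap X)))
     (at X)"
proof -
  obtain f' where "(f has_derivative f') (at (X ** Amap X))"
    using assms unfolding differentiable_def by blast
  then have "(f has_derivative (\<lambda>K. grad f (X ** Amap X) \<bullet> K)) (at (X ** Amap X))"
    using has_derivative_grad by metis
  from has_derivative_compose[OF has_derivative_mult_Amap this]
  show ?thesis unfolding gfun_def[abs_def] Gfun_def .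
qed

lemma inner_grad_gfun:
  assumes "f differentiable (at (X ** Amap X))"
  shows "grad (gfun f) X \<bullet> H
    = Gfun f X \<bullet> (X ** ((-(1/2)) *\<^sub>R (transpose X ** H + transpose H ** X)) + H ** Amap X)"
  using has_derivative_grad[OF has_derivative_gfun[OF assms]] by metis

lemma grad_hfun:
  assumes "f differentiable (at (X ** Amap X))"
  shows "grad (hfun f \<beta>) X = grad (gfun f) X + \<beta> *\<^sub>R (X ** (transpose X ** X - mat 1))"
proof (rule grad_eqI)
  have "(gfun f has_derivative (\<lambda>H. grad (gfun f) X \<bullet> H)) (at X)"
    using has_derivative_gfun[OF assms] inner_grad_gfun[OF assms] by simp
  from has_derivative_add[OF this has_derivative_penalty]
  show "(hfun f \<beta> has_derivative
      (\<lambda>H. (grad (gfun f) X + \<beta> *\<^sub>R (X ** (transpose X ** X - mat 1))) \<bullet> H)) (at X)"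
    unfolding hfun_def[abs_def] by (simp add: inner_add_left)
qed

lemma inner_grad_gfun_penalty:
  fixes X :: "real^'p^'n"
  defines "D \<equiv> transpose X ** X - mat 1"
  assumes "f differentiable (at (X ** Amap X))"
  shows "grad (gfun f) X \<bullet> (X ** D) = -(3/2) * (Gfun f X \<bullet> (X ** (D ** D)))"
proof -
  have gram: "transpose X ** X = D + mat 1" by (simp add: D_def)
  have A: "Amap X = mat 1 - (1/2) *\<^sub>R D"
    by (simp add: Amap_def gram vec_eq_iff mat_def field_simps)
  have XtXD: "transpose X ** (X ** D) = D ** D + D"
    by (simp add: matrix_mul_assoc gram matrix_add_rdistrib)
  have XDtX: "transpose (X ** D) ** X = D ** D + D"
    by (simp add: matrix_transpose_mul D_def transpose_gram_defect flip: matrix_mul_assoc)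
      (simp add: flip: D_def add: gram matrix_add_ldistrib)
  have XDA: "(X ** D) ** Amap X = X ** (D - (1/2) *\<^sub>R (D ** D))"
    by (simp add: A matrix_diff_ldistrib matrix_scalar_ac scalar_matrix_assoc matrix_mul_assoc)
  have "(-(1/2)) *\<^sub>R ((D ** D + D) + (D ** D + D)) + (D - (1/2) *\<^sub>R (D ** D))
      = (-(3/2)) *\<^sub>R (D ** D)"
    by (simp add: vec_eq_iff field_simps)
  then have "X ** ((-(1/2)) *\<^sub>R (transpose X ** (X ** D) + transpose (X ** D) ** X))
      + (X ** D) ** Amap X = X ** ((-(3/2)) *\<^sub>R (D ** D))"
    unfolding XtXD XDtX XDA by (simp only: flip: matrix_add_ldistrib)
  also have "\<dots> = (-(3/2)) *\<^sub>R (X ** (D ** D))"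
    by (simp only: matrix_scalar_ac scalar_matrix_assoc matrix_mul_assoc)
  finally show ?thesis
    using inner_grad_gfun[OF assms(2), of "X ** D"] by simp
qed

lemma abs_inner_matrix_mult_le:
  fixes D :: "real^'p^'p" and M :: "real^'q^'p"
  shows "\<bar>M \<bullet> (D ** M)\<bar> \<le> norm D * (norm M)\<^sup>2"
proof -
  have "\<bar>M \<bullet> (D ** M)\<bar> \<le> norm M * norm (D ** M)" by (rule Cauchy_Schwarz_ineq2)
  also have "\<dots> \<le> norm M * (norm D * norm M)"
    by (intro mult_left_mono norm_matrix_mult_le) simp
  finally show ?thesis by (simp add: power2_eq_square mult_ac)
qed

lemma norm_sq_matrix_mult_gram:
  fixes X :: "real^'p^'n" and M :: "real^'q^'p"
  assumes "transpose X ** X = mat 1 + D"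
  shows "(norm (X ** M))\<^sup>2 = (norm M)\<^sup>2 + M \<bullet> (D ** M)"
  by (simp add: power2_norm_eq_inner inner_matrix_mult_left matrix_mul_assoc assms
      matrix_add_rdistrib inner_add_right)

lemma norm_sq_matrix_mult_gram_bounds:
  fixes X :: "real^'p^'n" and M :: "real^'q^'p"
  assumes "transpose X ** X = mat 1 + D"
  shows "(1 - norm D) * (norm M)\<^sup>2 \<le> (norm (X ** M))\<^sup>2"
    and "(norm (X ** M))\<^sup>2 \<le> (1 + norm D) * (norm M)\<^sup>2"
  using norm_sq_matrix_mult_gram[OF assms, of M] abs_inner_matrix_mult_le[of M D]
  by (simp_all add: algebra_simps abs_le_iff)

lemma norm_sq_matrix_vector_mult_gram_le:
  fixes X :: "real^'p^'n" and v :: "real^'p"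
  assumes "transpose X ** X = mat 1 + D"
  shows "(norm (X *v v))\<^sup>2 \<le> (1 + norm D) * (norm v)\<^sup>2"
proof -
  have "(norm (X *v v))\<^sup>2 = v \<bullet> (transpose X *v (X *v v))"
    by (simp add: power2_norm_eq_inner dot_lmul_matrix[symmetric] inner_commute)
  also have "\<dots> = (norm v)\<^sup>2 + v \<bullet> (D *v v)"
    by (simp add: matrix_vector_mul_assoc assms matrix_vector_mult_add_rdistrib inner_add_right
        power2_norm_eq_inner)
  also have "v \<bullet> (D *v v) \<le> norm v * (norm D * norm v)"
    using norm_cauchy_schwarz[of v "D *v v"] norm_matrix_vector_mult_le[of D v]
    by (meson mult_left_mono norm_ge_zero order_trans)
  finally show ?thesis by (simp add: power2_eq_square algebra_simps)
qed

lemma OmegaBar_subset_Omega: "OmegaBar (1/6) \<subseteq> (Omega :: (real^'p^'n) set)"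
proof
  fix X :: "real^'p^'n" assume "X \<in> OmegaBar (1/6)"
  then have nD: "norm (transpose X ** X - mat 1) \<le> 1/6" by (simp add: OmegaBar_def)
  have "norm (X *v v) \<le> (1 + 1/12) * norm v" for v
  proof (rule power2_le_imp_le)
    have "(norm (X *v v))\<^sup>2 \<le> (1 + norm (transpose X ** X - mat 1)) * (norm v)\<^sup>2"
      by (rule norm_sq_matrix_vector_mult_gram_le) simp
    also have "\<dots> \<le> (1 + 1/12)\<^sup>2 * (norm v)\<^sup>2"
      by (rule mult_right_mono) (use nD in \<open>simp_all add: power2_eq_square\<close>)
    also have "\<dots> = ((1 + 1/12) * norm v)\<^sup>2"
      by (rule power_mult_distrib[symmetric])
    finally show "(norm (X *v v))\<^sup>2 \<le> ((1 + 1/12) * norm v)\<^sup>2" .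
  qed simp
  then have "onorm (\<lambda>v. X *v v) \<le> 1 + 1/12" by (rule onorm_le)
  then show "X \<in> Omega" by (simp add: Omega_def)
qed

lemma bounded_Omega: "bounded (Omega :: (real^'p^'n) set)"
proof -
  have "norm X \<le> sqrt (2 * real CARD('n) * real CARD('p))" if "X \<in> Omega" for X :: "real^'p^'n"
  proof -
    have entry: "\<bar>X$i$j\<bar> \<le> 13/12" for i j
    proof -
      have "\<bar>X$i$j\<bar> = \<bar>(X *v axis j 1)$i\<bar>"
        by (simp add: matrix_vector_mult_basis column_def)
      also have "\<dots> \<le> onorm (\<lambda>v. X *v v) * norm (axis j (1::real))"
        by (meson component_le_norm_cart onorm matrix_vector_mul_bounded_linear order_trans)
      also have "\<dots> \<le> 13/12" using that by (simp add: Omega_def)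
      finally show ?thesis .
    qed
    have "(norm X)\<^sup>2 \<le> (\<Sum>i\<in>(UNIV::'n set). \<Sum>j\<in>(UNIV::'p set). 2)"
      unfolding norm_sq_matrix
    proof (intro sum_mono)
      fix i j
      have "\<bar>X$i$j\<bar>\<^sup>2 \<le> (13/12)\<^sup>2" using entry[of i j] by (rule power_mono) simp
      then show "(X$i$j)\<^sup>2 \<le> 2" by (simp add: power2_eq_square)
    qed
    then show ?thesis by (simp add: real_le_rsqrt)
  qed
  then show ?thesis by (auto simp: bounded_iff)
qed

lemma norm_Gfun_le_M1:
  fixes f :: "real^'p^'n \<Rightarrow> real"
  assumes "locally_lipschitz (grad f)" and "X \<in> Omega"
  shows "norm (Gfun f X) \<le> M1 f"
proof -
  obtain R where "\<forall>Y \<in> (Omega :: (real^'p^'n) set). norm Y \<le> R"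
    using bounded_Omega by (auto simp: bounded_iff)
  then have R: "(Omega :: (real^'p^'n) set) \<subseteq> cball 0 R" by auto
  have "isCont (Gfun f) Y" for Y
    unfolding Gfun_def[abs_def]
    by (rule isCont_o2[OF has_derivative_continuous[OF has_derivative_mult_Amap]
          locally_lipschitz_imp_isCont[OF assms(1)]])
  then have "continuous_on (cball 0 R) (Gfun f)"
    by (simp add: continuous_at_imp_continuous_on)
  then have "bounded (Gfun f ` cball 0 R)"
    by (intro compact_imp_bounded compact_continuous_image compact_cball)
  then obtain B where "\<forall>Y\<in>Gfun f ` cball 0 R. norm Y \<le> B"
    by (auto simp: bounded_iff)
  then have "bdd_above ((\<lambda>X. norm (Gfun f X)) ` Omega)"
    using R by (intro bdd_aboveI2[of _ _ B]) blast
  with assms(2) show ?thesis unfolding M1_def by (rule cSUP_upper)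
qed

lemma norm_mult_gram_defect_bounds:
  fixes X :: "real^'p^'n"
  defines "D \<equiv> transpose X ** X - mat 1"
  assumes nD: "norm D \<le> 1/6"
  shows "(5/6) * (norm D)\<^sup>2 \<le> (norm (X ** D))\<^sup>2"
    and "norm (X ** (D ** D)) \<le> (4/3) * (norm D)\<^sup>2"
proof -
  have gram: "transpose X ** X = mat 1 + D" by (simp add: D_def)
  have "(5/6) * (norm D)\<^sup>2 \<le> (1 - norm D) * (norm D)\<^sup>2"
    using nD by (intro mult_right_mono) simp_all
  also have "\<dots> \<le> (norm (X ** D))\<^sup>2"
    by (rule norm_sq_matrix_mult_gram_bounds(1)[OF gram])
  finally show "(5/6) * (norm D)\<^sup>2 \<le> (norm (X ** D))\<^sup>2" .
  have "(norm (X ** (D ** D)))\<^sup>2 \<le> (1 + norm D) * (norm (D ** D))\<^sup>2"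
    by (rule norm_sq_matrix_mult_gram_bounds(2)[OF gram])
  also have "\<dots> \<le> (16/9) * ((norm D)\<^sup>2)\<^sup>2"
  proof (rule mult_mono)
    show "(norm (D ** D))\<^sup>2 \<le> ((norm D)\<^sup>2)\<^sup>2"
      using norm_matrix_mult_le[of D D] by (intro power_mono) (simp_all add: power2_eq_square)
  qed (use nD in simp_all)
  also have "\<dots> = ((4/3) * (norm D)\<^sup>2)\<^sup>2"
    by (simp add: power2_eq_square)
  finally show "norm (X ** (D ** D)) \<le> (4/3) * (norm D)\<^sup>2"
    by (rule power2_le_imp_le) simp
qed

theorem mainTheorem16:
  fixes f :: "real^'p::finite^'n::finite \<Rightarrow> real"
    and \<beta> :: real and X :: "real^'p^'n"
  assumes f_diff: "\<And>Y. f differentiable (at Y)"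
    and f_lip: "locally_lipschitz f"
    and gradf_lip: "locally_lipschitz (grad f)"
    and beta_pos: "\<beta> > 0"
    and X_in: "X \<in> OmegaBar (1/6)"
  shows "(norm (grad (hfun f \<beta>) X))\<^sup>2 \<ge> (norm (grad (gfun f) X))\<^sup>2
           + ((2/3) * \<beta>\<^sup>2 - 4 * \<beta> * M1 f) * (norm (transpose X ** X - mat 1))\<^sup>2"
proof -
  define D where "D = transpose X ** X - mat 1"
  define G where "G = Gfun f X"
  have nD: "norm D \<le> 1/6" using X_in by (simp add: OmegaBar_def D_def)
  note XD_bounds = norm_mult_gram_defect_bounds[of X, folded D_def, OF nD]
  have "norm G \<le> M1 f"
    unfolding G_def using norm_Gfun_le_M1[OF gradf_lip] OmegaBar_subset_Omega X_in by blast
  then have "G \<bullet> (X ** (D ** D)) \<le> M1 f * ((4/3) * (norm D)\<^sup>2)"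
    using norm_cauchy_schwarz[of G "X ** (D ** D)"] XD_bounds(2)
    by (meson mult_mono norm_ge_zero order_trans)
  then have "3 * \<beta> * (G \<bullet> (X ** (D ** D))) \<le> 3 * \<beta> * (M1 f * ((4/3) * (norm D)\<^sup>2))"
    using beta_pos by (intro mult_left_mono) simp_all
  then have cross: "-(4 * \<beta> * M1 f) * (norm D)\<^sup>2 \<le> 2 * \<beta> * (grad (gfun f) X \<bullet> (X ** D))"
    using inner_grad_gfun_penalty[OF f_diff, of X] by (simp add: G_def D_def)
  have "(2/3) * \<beta>\<^sup>2 * (norm D)\<^sup>2 \<le> \<beta>\<^sup>2 * ((5/6) * (norm D)\<^sup>2)"
    by simp
  also have "\<dots> \<le> \<beta>\<^sup>2 * (norm (X ** D))\<^sup>2"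
    by (rule mult_left_mono[OF XD_bounds(1)]) simp
  finally have penalty: "(2/3) * \<beta>\<^sup>2 * (norm D)\<^sup>2 \<le> \<beta>\<^sup>2 * (norm (X ** D))\<^sup>2" .
  have "((2/3) * \<beta>\<^sup>2 - 4 * \<beta> * M1 f) * (norm D)\<^sup>2
      = (2/3) * \<beta>\<^sup>2 * (norm D)\<^sup>2 + -(4 * \<beta> * M1 f) * (norm D)\<^sup>2"
    by (simp add: algebra_simps)
  then show ?thesis
    using grad_hfun[OF f_diff, of \<beta> X] cross penalty
    by (simp add: D_def[symmetric] power2_norm_add_scaleR)
qed

end
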